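(* Consider $N$ agents. For each agent $k$ let $R_{u,k}$ be an $M\times M$ Hermitian positive definite matrix, $c_k\in(0,\infty)$, $\delta_k,r_k\in(0,1)$, and $\chi_k\triangleq\frac{1-\delta_kr_k}{\delta_k(1-r_k)}$, $\chi_{\min}\triangleq\min_k\chi_k$. Let $\mu>0$ with $\mu\lambda_{\max}(R_{u,k})\le1$ for all $k$, and $\rho_{\max}\triangleq\max_k\lambda_{\max}(I-\mu R_{u,k})$. For each $k$ and time $i$, let $\widetilde{\boldsymbol w}_{k,i-1}$ be a random vector in $\mathbb{C}^M$, let $\bar{\boldsymbol b}_k(i)\triangleq\|(I-\mu R_{u,k})\widetilde{\boldsymbol w}_{k,i-1}\|^2_{R_{u,k}}$, and for each neighbor $\ell$ let $\boldsymbol\theta_{\ell k}(i)$ be a random variable with values in $[\varepsilon,1]$ for some $\varepsilon\in(0,1)$. Agent $k$'s action toward $\ell$ is $\boldsymbol a_{k\ell}(i)=1$ if $\bar{\boldsymbol b}_k(i)\boldsymbol\theta_{\ell k}(i)>c_k\chi_k$ and $\boldsymbol a_{k\ell}(i)=0$ otherwise. Suppose there exist a constant $\eta>0$ and an index $i_0$ such that $\mathbb{E}\|\widetilde{\boldsymbol w}_{k,i}\|^2_{R_{u,k}}\le\eta\mu$ for all $k$ and all $i\ge i_0$. Then for every agent $k$, every neighbor $\ell$ and every $i\ge i_0+1$, $${\rm Prob}\{\boldsymbol a_{k\ell}(i)=1\}\le\min\Big\{\frac{c^o}{c_k},1\Big\},\qquad c^o\triangleq\frac{\eta\mu\rho_{\max}^2}{\chi_{\min}},$$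 where $c^o$ does not depend on $c_k$.
   Context: For a Hermitian positive definite $R$, $\|x\|^2_R\triangleq x^*Rx$. In the paper, $\widetilde{\boldsymbol w}_{k,i-1}=w^o-\boldsymbol w_{k,i-1}$ is agent $k$'s estimation error in a diffusion LMS network, $\mu$ the step-size, $R_{u,k}$ the regressor covariance, $c_k$ the per-transmission communication cost, $\delta_k$ a discount factor, $r_k$ the reputation smoothing factor, $\boldsymbol\theta_{\ell k}(i)$ the reputation score agent $k$ keeps about $\ell$ (floored at $\varepsilon$), and the action rule is the agent's (risk-taking) best response rule; the hypothesis on $\eta$ is the paper's steady-state mean-square bound ("after sufficient iterations"). *)

theory Defs
  imports "HOL-Probability.Probability"
begin

text \<open>Weighted squared norm  x^* R x  (real part; it is real for Hermitian R).\<close>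
definition wnorm2 :: "complex^'m^'m \<Rightarrow> complex^'m \<Rightarrow> real" where
  "wnorm2 R x = Re (\<Sum>i\<in>UNIV. cnj (x $ i) * ((R *v x) $ i))"

definition hermitian_mat :: "complex^'m^'m \<Rightarrow> bool" where
  "hermitian_mat R \<longleftrightarrow> (\<forall>i j. R $ i $ j = cnj (R $ j $ i))"

definition pos_def_mat :: "complex^'m^'m \<Rightarrow> bool" where
  "pos_def_mat R \<longleftrightarrow> hermitian_mat R \<and> (\<forall>x. x \<noteq> 0 \<longrightarrow> wnorm2 R x > 0)"

text \<open>Largest eigenvalue of a Hermitian matrix (its eigenvalues are real).\<close>
definition lambda_max :: "complex^'m^'m \<Rightarrow> real" where
  "lambda_max R = Max {t::real. \<exists>x. x \<noteq> 0 \<and> R *v x = complex_of_real t *s x}"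

definition chi :: "real \<Rightarrow> real \<Rightarrow> real" where
  "chi \<delta> r = (1 - \<delta> * r) / (\<delta> * (1 - r))"

end

theory Submission
  imports Defs
begin

text \<open>
  With \<open>A = I - \<mu> R\<close>, the weighted error norm contracts:
  \<open>\<parallel>A x\<parallel>\<^sup>2\<^sub>R \<le> \<lambda>\<^sub>m\<^sub>a\<^sub>x(A)\<^sup>2 \<parallel>x\<parallel>\<^sup>2\<^sub>R\<close>. Instead of the spectral theorem we argue
  variationally: a maximiser of the generalised Rayleigh quotient \<open>x\<^sup>* A R A x / x\<^sup>* R x\<close> is a
  generalised eigenvector for some value \<open>t\<close>; since \<open>A\<close> commutes with the invertible \<open>R\<close>, it is an
  eigenvector of \<open>A\<^sup>2\<close>, so \<open>\<surd>t\<close> or \<open>-\<surd>t\<close> is an eigenvalue of \<open>A\<close>, and \<open>\<mu> \<lambda>\<^sub>m\<^sub>a\<^sub>x(R) \<le> 1\<close> makes all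
  eigenvalues of \<open>A\<close> nonnegative. Hence \<open>E b\<^sub>k(i) \<le> \<rho>\<^sub>m\<^sub>a\<^sub>x\<^sup>2 \<eta> \<mu>\<close>. As \<open>\<theta> \<le> 1\<close>, the action
  \<open>a\<^sub>k\<^sub>\<ell>(i) = 1\<close> forces \<open>b\<^sub>k(i) \<ge> c\<^sub>k \<chi>\<^sub>k \<ge> c\<^sub>k \<chi>\<^sub>m\<^sub>i\<^sub>n\<close>, and Markov's inequality concludes.
\<close>

definition self_adjoint :: "('v::euclidean_space \<Rightarrow> 'v) \<Rightarrow> bool" where
  "self_adjoint L \<longleftrightarrow> linear L \<and> (\<forall>x y. inner x (L y) = inner (L x) y)"

definition eigenvalues :: "('v::euclidean_space \<Rightarrow> 'v) \<Rightarrow> real set" where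
  "eigenvalues L = {t. \<exists>x. x \<noteq> 0 \<and> L x = t *\<^sub>R x}"

lemma self_adjoint_diff:
  "self_adjoint L \<Longrightarrow> self_adjoint K \<Longrightarrow> self_adjoint (\<lambda>x. L x - K x)"
  by (simp add: self_adjoint_def linear_compose_sub inner_diff_left inner_diff_right)

lemma self_adjoint_scaleR:
  "self_adjoint L \<Longrightarrow> self_adjoint (\<lambda>x. c *\<^sub>R L x)"
  by (simp add: self_adjoint_def linear_compose_scale_right)

lemma self_adjoint_id: "self_adjoint (\<lambda>x. x)"
  by (simp add: self_adjoint_def linear_id[unfolded id_def])

lemma self_adjoint_sandwich:
  assumes "self_adjoint A" "self_adjoint L"
  shows "self_adjoint (\<lambda>x. A (L (A x)))"
proof -
  have "linear (A \<circ> (L \<circ> A))" using assms by (simp add: self_adjoint_def linear_compose)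
  with assms show ?thesis by (simp add: self_adjoint_def o_def)
qed

lemma finite_eigenvalues_self_adjoint:
  assumes "self_adjoint L" shows "finite (eigenvalues L)"
proof -
  define e where "e t = (SOME x. x \<noteq> 0 \<and> L x = t *\<^sub>R x)" for t
  have e: "e t \<noteq> 0 \<and> L (e t) = t *\<^sub>R e t" if "t \<in> eigenvalues L" for t
    using that unfolding eigenvalues_def e_def by (metis (mono_tags, lifting) mem_Collect_eq someI_ex)
  have orth: "inner (e s) (e t) = 0" if "s \<in> eigenvalues L" "t \<in> eigenvalues L" "s \<noteq> t" for s t
  proof -
    have "t * inner (e s) (e t) = inner (e s) (L (e t))" using e[OF that(2)] by simp
    also have "\<dots> = inner (L (e s)) (e t)" using assms self_adjoint_def by blast
    also have "\<dots> = s * inner (e s) (e t)" using e[OF that(1)] by simp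
    finally show ?thesis using that(3) by auto
  qed
  have "inj_on e (eigenvalues L)"
    by (rule inj_onI) (metis e orth inner_eq_zero_iff)
  moreover have "finite (e ` eigenvalues L)"
    by (rule pairwise_orthogonal_imp_finite) (fastforce simp: pairwise_def orthogonal_def intro: orth)
  ultimately show ?thesis using finite_imageD by blast
qed

lemma nonneg_form_eq_0_imp_eq_0:
  assumes "self_adjoint P" "\<And>x. 0 \<le> inner x (P x)" "inner z (P z) = 0"
  shows "P z = 0"
proof -
  have lin: "linear P" using assms(1) self_adjoint_def by blast
  define y where "y = P z"
  define a where "a = inner y y"
  define b where "b = inner y (P y)"
  have b0: "b \<ge> 0" using assms(2) b_def by simp
  have "inner z (P y) = a" unfolding a_def y_def using assms(1) self_adjoint_def
    by (metis inner_commute)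
  then have "0 \<le> 2 * s * a + s^2 * b" for s
    using assms(2)[of "z + s *\<^sub>R y"] assms(3) linear_add[OF lin] linear_scale[OF lin]
    by (simp add: a_def b_def y_def inner_add_left inner_add_right power2_eq_square algebra_simps)
  moreover have "2 * (- a / (b + 1)) * a + (- a / (b + 1))^2 * b = - (a\<^sup>2 * (b + 2)) / (b + 1)\<^sup>2"
    using b0 by (simp add: divide_simps power2_eq_square) algebra
  ultimately have "0 \<le> - (a\<^sup>2 * (b + 2)) / (b + 1)\<^sup>2" by metis
  moreover have "0 < a\<^sup>2 * (b + 2) / (b + 1)\<^sup>2" if "a \<noteq> 0"
    using that b0 by (intro divide_pos_pos mult_pos_pos) auto
  ultimately have "a = 0" by fastforce
  then show ?thesis unfolding a_def y_def by simp
qed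

lemma continuous_on_quadratic_form:
  assumes "linear (L :: 'v::euclidean_space \<Rightarrow> 'v)"
  shows "continuous_on S (\<lambda>x. inner x (L x))"
  using assms by (intro continuous_intros linear_continuous_on linear_conv_bounded_linear[THEN iffD1])

lemma quadratic_form_scaleR:
  assumes "linear L" shows "inner (c *\<^sub>R x) (L (c *\<^sub>R x)) = c\<^sup>2 * inner x (L x)"
  using linear_scale[OF assms] by (simp add: power2_eq_square)

lemma positive_definite_form_coercive:
  fixes L :: "'v::euclidean_space \<Rightarrow> 'v"
  assumes lin: "linear L" and pd: "\<And>x. x \<noteq> 0 \<Longrightarrow> 0 < inner x (L x)"
  obtains m where "m > 0" "\<And>x. m * (norm x)\<^sup>2 \<le> inner x (L x)"
proof -
  obtain u :: 'v where "norm u = 1" using vector_choose_size[of 1] by auto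
  then have "sphere (0::'v) 1 \<noteq> {}" by auto
  then obtain v where v: "v \<in> sphere 0 1" and v_min: "\<And>y. y \<in> sphere 0 1 \<Longrightarrow> inner v (L v) \<le> inner y (L y)"
    using continuous_attains_inf[OF compact_sphere _ continuous_on_quadratic_form[OF lin]] by blast
  define m where "m = inner v (L v)"
  have "m * (norm x)\<^sup>2 \<le> inner x (L x)" for x
  proof (cases "x = 0")
    case True then show ?thesis by (simp add: linear_0[OF lin])
  next
    case False
    have "m \<le> inner ((1 / norm x) *\<^sub>R x) (L ((1 / norm x) *\<^sub>R x))"
      unfolding m_def using False by (intro v_min) simp
    with False show ?thesis
      unfolding quadratic_form_scaleR[OF lin] by (simp add: power_divide field_simps)
  qed
  moreover have "m > 0" unfolding m_def using v by (intro pd) auto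
  ultimately show ?thesis using that by blast
qed

lemma max_generalized_Rayleigh_quotient:
  fixes LR LB :: "'v::euclidean_space \<Rightarrow> 'v"
  assumes linR: "linear LR" and linB: "linear LB" and pd: "\<And>x. x \<noteq> 0 \<Longrightarrow> 0 < inner x (LR x)"
  obtains x0 where "inner x0 (LR x0) = 1" "\<And>x. inner x (LB x) \<le> inner x0 (LB x0) * inner x (LR x)"
proof -
  define q where "q x = inner x (LR x)" for x
  define f where "f x = inner x (LB x)" for x
  define K where "K = {x. q x = 1}"
  have q_scaleR: "q (c *\<^sub>R x) = c\<^sup>2 * q x" for c x
    unfolding q_def by (rule quadratic_form_scaleR[OF linR])
  have normalize: "(1 / sqrt (q x)) *\<^sub>R x \<in> K" if "x \<noteq> 0" for x
    using pd[OF that, folded q_def] by (simp add: K_def q_scaleR power_divide)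
  obtain m where m: "m > 0" "\<And>x. m * (norm x)\<^sup>2 \<le> q x"
    using positive_definite_form_coercive[OF linR pd] unfolding q_def by blast
  have "closed K"
    unfolding K_def q_def by (intro closed_Collect_eq continuous_on_quadratic_form linR continuous_intros)
  moreover have "bounded K"
  proof -
    have "norm x \<le> sqrt (1 / m)" if "x \<in> K" for x
      using m(1) m(2)[of x] that by (intro real_le_rsqrt) (simp add: K_def field_simps)
    then show ?thesis unfolding bounded_iff by blast
  qed
  ultimately have "compact K" by (simp add: compact_eq_bounded_closed)
  moreover have "K \<noteq> {}" using normalize[OF nonzero_Basis[OF SOME_Basis]] by blast
  moreover have "continuous_on K f" unfolding f_def by (rule continuous_on_quadratic_form[OF linB])
  ultimately obtain x0 where x0: "x0 \<in> K" "\<And>y. y \<in> K \<Longrightarrow> f y \<le> f x0"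
    using continuous_attains_sup by metis
  have "f x \<le> f x0 * q x" for x
  proof (cases "x = 0")
    case True then show ?thesis by (simp add: q_def f_def linear_0[OF linR] linear_0[OF linB])
  next
    case False
    have "f ((1 / sqrt (q x)) *\<^sub>R x) \<le> f x0" using x0(2) normalize[OF False] .
    moreover have "f (c *\<^sub>R x) = c\<^sup>2 * f x" for c
      unfolding f_def by (rule quadratic_form_scaleR[OF linB])
    ultimately show ?thesis
      using pd[OF False, folded q_def] by (simp add: power_divide field_simps)
  qed
  with x0(1) show ?thesis using that unfolding K_def q_def f_def by blast
qed

lemma generalized_eigenvector_of_max_Rayleigh_quotient:
  fixes LR LB :: "'v::euclidean_space \<Rightarrow> 'v"
  assumes R: "self_adjoint LR" and B: "self_adjoint LB" and pd: "\<And>x. x \<noteq> 0 \<Longrightarrow> 0 < inner x (LR x)"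
  obtains x0 t where "x0 \<noteq> 0" "LB x0 = t *\<^sub>R LR x0" "\<And>x. inner x (LB x) \<le> t * inner x (LR x)"
proof -
  have linR: "linear LR" and linB: "linear LB" using R B self_adjoint_def by auto
  obtain x0 where x0: "inner x0 (LR x0) = 1" and bound: "\<And>x. inner x (LB x) \<le> inner x0 (LB x0) * inner x (LR x)"
    using max_generalized_Rayleigh_quotient[OF linR linB pd] by blast
  define t where "t = inner x0 (LB x0)"
  define P where "P x = t *\<^sub>R LR x - LB x" for x
  have "self_adjoint P"
    unfolding P_def by (intro self_adjoint_diff self_adjoint_scaleR R B)
  moreover have "0 \<le> inner x (P x)" for x
    using bound[of x] by (simp add: P_def t_def inner_diff_right)
  moreover have "inner x0 (P x0) = 0"
    using x0 by (simp add: P_def t_def inner_diff_right)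
  ultimately have "P x0 = 0" by (rule nonneg_form_eq_0_imp_eq_0)
  then have "LB x0 = t *\<^sub>R LR x0" by (simp add: P_def)
  moreover have "x0 \<noteq> 0" using x0 linear_0[OF linR] by auto
  ultimately show ?thesis using that bound unfolding t_def by blast
qed

lemma sqrt_mem_eigenvalues_of_square:
  fixes A :: "'v::euclidean_space \<Rightarrow> 'v"
  assumes lin: "linear A" and x0: "x0 \<noteq> 0" "A (A x0) = t *\<^sub>R x0" and "t \<ge> 0"
    and nonneg: "\<And>s. s \<in> eigenvalues A \<Longrightarrow> 0 \<le> s"
  shows "sqrt t \<in> eigenvalues A"
proof -
  define w where "w = A x0 + sqrt t *\<^sub>R x0"
  have "A w = sqrt t *\<^sub>R w"
    using x0(2) \<open>t \<ge> 0\<close> linear_add[OF lin] linear_scale[OF lin]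
    by (simp add: w_def algebra_simps flip: power2_eq_square)
  show ?thesis
  proof (cases "w = 0")
    case False
    with \<open>A w = sqrt t *\<^sub>R w\<close> show ?thesis by (auto simp: eigenvalues_def)
  next
    case True
    then have "A x0 = (- sqrt t) *\<^sub>R x0" by (simp add: w_def eq_neg_iff_add_eq_0)
    then have "- sqrt t \<in> eigenvalues A" using x0(1) by (auto simp: eigenvalues_def)
    moreover from nonneg[OF this] \<open>t \<ge> 0\<close> have "sqrt t = 0" by simp
    ultimately show ?thesis by simp
  qed
qed

lemma eigenvalues_id_minus_scaleR_nonneg:
  assumes "\<mu> > 0" and "\<And>s. s \<in> eigenvalues L \<Longrightarrow> \<mu> * s \<le> 1"
    and "s \<in> eigenvalues (\<lambda>x. x - \<mu> *\<^sub>R L x)"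
  shows "0 \<le> s"
proof -
  obtain v where "v \<noteq> 0" "v - \<mu> *\<^sub>R L v = s *\<^sub>R v"
    using assms(3) by (auto simp: eigenvalues_def)
  then have "\<mu> *\<^sub>R L v = (1 - s) *\<^sub>R v" by (simp add: algebra_simps)
  then have "L v = (1 / \<mu>) *\<^sub>R ((1 - s) *\<^sub>R v)"
    using \<open>\<mu> > 0\<close> by (metis less_irrefl scaleR_one scaleR_scaleR nonzero_divide_eq_eq)
  then have "L v = ((1 - s) / \<mu>) *\<^sub>R v" by simp
  with \<open>v \<noteq> 0\<close> have "(1 - s) / \<mu> \<in> eigenvalues L" by (auto simp: eigenvalues_def)
  with assms(1,2) show ?thesis by fastforce
qed

lemma quadratic_form_id_minus_scaleR_bound:
  fixes L :: "'v::euclidean_space \<Rightarrow> 'v"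
  assumes L: "self_adjoint L" and pd: "\<And>x. x \<noteq> 0 \<Longrightarrow> 0 < inner x (L x)"
    and "\<mu> > 0" and lam: "\<And>s. s \<in> eigenvalues L \<Longrightarrow> \<mu> * s \<le> 1"
  defines "A \<equiv> \<lambda>x. x - \<mu> *\<^sub>R L x"
  shows "0 \<le> Max (eigenvalues A)"
    and "inner (A x) (L (A x)) \<le> (Max (eigenvalues A))\<^sup>2 * inner x (L x)"
proof -
  have linL: "linear L" using L self_adjoint_def by blast
  have A: "self_adjoint A" unfolding A_def by (intro self_adjoint_diff self_adjoint_scaleR self_adjoint_id L)
  then have linA: "linear A" by (simp add: self_adjoint_def)
  have A_nonneg: "0 \<le> s" if "s \<in> eigenvalues A" for s
    using \<open>\<mu> > 0\<close> lam that unfolding A_def by (rule eigenvalues_id_minus_scaleR_nonneg)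
  have form_nonneg: "0 \<le> inner x (L x)" for x
    using pd[of x] by (cases "x = 0") (auto simp: linear_0[OF linL])
  obtain x0 t where x0: "x0 \<noteq> 0" "A (L (A x0)) = t *\<^sub>R L x0"
    and bound: "\<And>x. inner x (A (L (A x))) \<le> t * inner x (L x)"
    using generalized_eigenvector_of_max_Rayleigh_quotient[OF L self_adjoint_sandwich[OF A L] pd] by blast
  have "A (L y) = L (A y)" for y
    by (simp add: A_def linear_diff[OF linL] linear_scale[OF linL])
  then have "L (A (A x0)) = L (t *\<^sub>R x0)"
    using x0(2) by (simp add: linear_scale[OF linL])
  then have "L (A (A x0) - t *\<^sub>R x0) = 0" by (simp add: linear_diff[OF linL])
  then have AA: "A (A x0) = t *\<^sub>R x0"
    using pd[of "A (A x0) - t *\<^sub>R x0"] by (metis inner_zero_right less_irrefl right_minus_eq)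
  have "inner (A x0) (L (A x0)) = inner x0 (A (L (A x0)))"
    using A by (simp add: self_adjoint_def)
  also have "\<dots> = t * inner x0 (L x0)" using x0(2) by simp
  finally have "t * inner x0 (L x0) = inner (A x0) (L (A x0))" ..
  then have "t \<ge> 0" using pd[OF x0(1)] form_nonneg[of "A x0"] by (metis zero_le_mult_iff not_le)
  then have "sqrt t \<in> eigenvalues A"
    using sqrt_mem_eigenvalues_of_square[OF linA x0(1) AA] A_nonneg by blast
  then have "sqrt t \<le> Max (eigenvalues A)"
    using finite_eigenvalues_self_adjoint[OF A] by (rule Max_ge[rotated])
  then show "0 \<le> Max (eigenvalues A)" by (meson order_trans real_sqrt_ge_zero \<open>t \<ge> 0\<close>)
  have "t \<le> (Max (eigenvalues A))\<^sup>2"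
    using \<open>sqrt t \<le> _\<close> \<open>t \<ge> 0\<close> by (metis power_mono real_sqrt_ge_zero real_sqrt_pow2)
  with bound[of x] form_nonneg[of x] show "inner (A x) (L (A x)) \<le> (Max (eigenvalues A))\<^sup>2 * inner x (L x)"
    using A by (smt (verit) mult_right_mono self_adjoint_def)
qed

lemma inner_vec_complex: "inner (x::complex^'m) y = Re (\<Sum>i\<in>UNIV. cnj (x $ i) * y $ i)"
  by (simp add: inner_vec_def Re_sum inner_complex_def)

lemma wnorm2_eq_inner: "wnorm2 R x = inner x (R *v x)"
  by (simp add: wnorm2_def inner_vec_complex)

lemma wnorm2_nonneg: "pos_def_mat R \<Longrightarrow> 0 \<le> wnorm2 R x"
  by (cases "x = 0") (auto simp: pos_def_mat_def wnorm2_def less_imp_le)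

lemma continuous_on_wnorm2: "continuous_on S (\<lambda>x. wnorm2 R x)"
  unfolding wnorm2_eq_inner by (rule continuous_on_quadratic_form) (rule matrix_vector_mul_linear)

lemma borel_measurable_wnorm2_mult:
  assumes "f \<in> borel_measurable M"
  shows "(\<lambda>s. wnorm2 R (N *v f s)) \<in> borel_measurable M"
proof -
  have "continuous_on UNIV (\<lambda>x. wnorm2 R (N *v x))"
    using continuous_on_compose2[OF continuous_on_wnorm2 matrix_vector_mult_linear_continuous_on] by blast
  then show ?thesis
    using measurable_compose[OF assms borel_measurable_continuous_onI] by (simp add: o_def)
qed

lemma complex_scale_eq_scaleR: "complex_of_real t *s (x::complex^'m) = t *\<^sub>R x"
  unfolding vec_eq_iff vector_scaleR_component by (simp only: scaleR_conv_of_real vector_smult_component simp_thms)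

lemma lambda_max_eq_Max_eigenvalues: "lambda_max M = Max (eigenvalues ((*v) M))"
  by (simp add: lambda_max_def eigenvalues_def complex_scale_eq_scaleR)

lemma hermitian_mat_self_adjoint:
  fixes R :: "complex^'m^'m"
  assumes "hermitian_mat R"
  shows "self_adjoint ((*v) R)"
proof -
  have cnj_R: "cnj (R $ i $ j) = R $ j $ i" for i j
    using assms by (metis hermitian_mat_def complex_cnj_cnj)
  have "(\<Sum>i\<in>UNIV. cnj (x $ i) * (R *v y) $ i) = (\<Sum>i\<in>UNIV. \<Sum>j\<in>UNIV. cnj (x $ i) * R $ i $ j * y $ j)"
    for x y :: "complex^'m"
    by (simp add: matrix_vector_mult_def sum_distrib_left mult.assoc)
  also have "\<dots> x y = (\<Sum>j\<in>UNIV. \<Sum>i\<in>UNIV. cnj (x $ i) * R $ i $ j * y $ j)" for x y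
    by (rule sum.swap)
  also have "\<dots> x y = (\<Sum>j\<in>UNIV. cnj ((R *v x) $ j) * y $ j)" for x y
    by (simp add: matrix_vector_mult_def sum_distrib_right sum_distrib_left cnj_R ac_simps)
  finally show ?thesis
    by (simp add: self_adjoint_def inner_vec_complex matrix_vector_mul_linear)
qed

lemma wnorm2_id_minus_scaleR_bound:
  fixes R :: "complex^'m^'m"
  assumes pd: "pos_def_mat R" and "\<mu> > 0" and "\<mu> * lambda_max R \<le> 1"
  shows "0 \<le> lambda_max (mat 1 - \<mu> *\<^sub>R R)"
    and "wnorm2 R ((mat 1 - \<mu> *\<^sub>R R) *v x) \<le> (lambda_max (mat 1 - \<mu> *\<^sub>R R))\<^sup>2 * wnorm2 R x"
proof -
  have R: "self_adjoint ((*v) R)"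
    using pd hermitian_mat_self_adjoint pos_def_mat_def by blast
  have "\<mu> * s \<le> 1" if "s \<in> eigenvalues ((*v) R)" for s
  proof -
    have "s \<le> lambda_max R"
      unfolding lambda_max_eq_Max_eigenvalues using finite_eigenvalues_self_adjoint[OF R] that by (rule Max_ge)
    then show ?thesis using assms(2,3) by (smt (verit) mult_left_mono)
  qed
  moreover have "(\<mu> *\<^sub>R R) *v x = \<mu> *\<^sub>R (R *v x)" for x
    by (simp add: vec_eq_iff matrix_vector_mult_def scaleR_sum_right)
  then have "(*v) (mat 1 - \<mu> *\<^sub>R R) = (\<lambda>x. x - \<mu> *\<^sub>R (R *v x))"
    by (simp add: fun_eq_iff matrix_vector_mult_diff_rdistrib)
  moreover have "x \<noteq> 0 \<Longrightarrow> 0 < inner x (R *v x)" for x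
    using pd unfolding pos_def_mat_def wnorm2_eq_inner by blast
  ultimately show "0 \<le> lambda_max (mat 1 - \<mu> *\<^sub>R R)"
    and "wnorm2 R ((mat 1 - \<mu> *\<^sub>R R) *v x) \<le> (lambda_max (mat 1 - \<mu> *\<^sub>R R))\<^sup>2 * wnorm2 R x"
    using quadratic_form_id_minus_scaleR_bound[OF R _ \<open>\<mu> > 0\<close>]
    by (simp_all add: lambda_max_eq_Max_eigenvalues wnorm2_eq_inner)
qed

lemma nn_integral_wnorm2_id_minus_scaleR_le:
  fixes R :: "complex^'m^'m"
  assumes pd: "pos_def_mat R" and "\<mu> > 0" and "\<mu> * lambda_max R \<le> 1"
    and \<rho>: "lambda_max (mat 1 - \<mu> *\<^sub>R R) \<le> \<rho>"
    and f: "f \<in> borel_measurable M" and "0 \<le> C"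
    and msd: "(\<integral>\<^sup>+ s. ennreal (wnorm2 R (f s)) \<partial>M) \<le> ennreal C"
  shows "(\<integral>\<^sup>+ s. ennreal (wnorm2 R ((mat 1 - \<mu> *\<^sub>R R) *v f s)) \<partial>M) \<le> ennreal (\<rho>\<^sup>2 * C)"
proof -
  note bound = wnorm2_id_minus_scaleR_bound[OF pd \<open>\<mu> > 0\<close> \<open>\<mu> * lambda_max R \<le> 1\<close>]
  have "(lambda_max (mat 1 - \<mu> *\<^sub>R R))\<^sup>2 \<le> \<rho>\<^sup>2"
    using \<rho> bound(1) by (rule power_mono)
  then have "wnorm2 R ((mat 1 - \<mu> *\<^sub>R R) *v x) \<le> \<rho>\<^sup>2 * wnorm2 R x" for x
    using bound(2)[of x] wnorm2_nonneg[OF pd, of x] by (smt (verit) mult_right_mono)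
  then have "(\<integral>\<^sup>+ s. ennreal (wnorm2 R ((mat 1 - \<mu> *\<^sub>R R) *v f s)) \<partial>M)
      \<le> (\<integral>\<^sup>+ s. ennreal (\<rho>\<^sup>2) * ennreal (wnorm2 R (f s)) \<partial>M)"
    using wnorm2_nonneg[OF pd] by (intro nn_integral_mono) (simp add: ennreal_mult[symmetric] ennreal_leI)
  also have "\<dots> = ennreal (\<rho>\<^sup>2) * (\<integral>\<^sup>+ s. ennreal (wnorm2 R (f s)) \<partial>M)"
    using borel_measurable_wnorm2_mult[OF f, of R "mat 1"] by (intro nn_integral_cmult) simp
  also have "\<dots> \<le> ennreal (\<rho>\<^sup>2 * C)"
    using msd \<open>0 \<le> C\<close> by (simp add: ennreal_mult mult_left_mono)
  finally show ?thesis .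
qed

lemma (in prob_space) prob_ge_le_nn_integral_div:
  assumes f: "f \<in> borel_measurable M" and "a > 0" and "0 \<le> C"
    and int: "(\<integral>\<^sup>+ s. ennreal (f s) \<partial>M) \<le> ennreal C"
  shows "prob {s \<in> space M. a \<le> f s} \<le> C / a"
proof -
  define B where "B = {s \<in> space M. a \<le> f s}"
  have B: "B \<in> events" unfolding B_def using f by measurable
  have "ennreal (a * prob B) = (\<integral>\<^sup>+ s. ennreal a * indicator B s \<partial>M)"
    using \<open>a > 0\<close> B by (simp add: nn_integral_cmult_indicator emeasure_eq_measure ennreal_mult)
  also have "\<dots> \<le> (\<integral>\<^sup>+ s. ennreal (f s) \<partial>M)"
    by (intro nn_integral_mono) (auto simp: B_def indicator_def intro: ennreal_leI)
  finally have "ennreal (a * prob B) \<le> ennreal C" using int by (rule order_trans)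
  then have "a * prob B \<le> C" using \<open>0 \<le> C\<close> by (simp add: ennreal_le_iff)
  with \<open>a > 0\<close> show ?thesis unfolding B_def by (simp add: field_simps)
qed

lemma chi_pos:
  assumes "0 < \<delta>" "\<delta> < 1" "0 < r" "r < 1"
  shows "0 < chi \<delta> r"
proof -
  have "\<delta> * r < 1" using assms mult_strict_mono[of \<delta> 1 r 1] by simp
  with assms show ?thesis unfolding chi_def by (intro divide_pos_pos) auto
qed

lemma (in prob_space) prob_best_response_action_le:
  fixes R :: "complex^'m^'m" and w :: "'a \<Rightarrow> complex^'m"
  assumes pd: "pos_def_mat R" and "\<mu> > 0" and "\<mu> * lambda_max R \<le> 1"
    and \<rho>: "lambda_max (mat 1 - \<mu> *\<^sub>R R) \<le> \<rho>"
    and "c > 0" and "0 < \<kappa>min" and "\<kappa>min \<le> \<kappa>"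
    and w: "w \<in> borel_measurable M" and \<theta>: "\<And>s. s \<in> space M \<Longrightarrow> \<theta> s \<le> 1"
    and "0 \<le> C" and msd: "(\<integral>\<^sup>+ s. ennreal (wnorm2 R (w s)) \<partial>M) \<le> ennreal C"
  shows "prob {s \<in> space M. wnorm2 R ((mat 1 - \<mu> *\<^sub>R R) *v w s) * \<theta> s > c * \<kappa>}
    \<le> min (C * \<rho>\<^sup>2 / \<kappa>min / c) 1"
proof -
  define b where "b s = wnorm2 R ((mat 1 - \<mu> *\<^sub>R R) *v w s)" for s
  have "c * \<kappa> > 0" using \<open>c > 0\<close> \<open>0 < \<kappa>min\<close> \<open>\<kappa>min \<le> \<kappa>\<close> by simp
  have "{s \<in> space M. b s * \<theta> s > c * \<kappa>} \<subseteq> {s \<in> space M. c * \<kappa> \<le> b s}"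
    using \<theta> wnorm2_nonneg[OF pd] unfolding b_def by (auto intro: mult_left_le order_trans[OF less_imp_le])
  then have "prob {s \<in> space M. b s * \<theta> s > c * \<kappa>} \<le> prob {s \<in> space M. c * \<kappa> \<le> b s}"
    using borel_measurable_wnorm2_mult[OF w] unfolding b_def by (intro finite_measure_mono) measurable
  also have "\<dots> \<le> \<rho>\<^sup>2 * C / (c * \<kappa>)"
    using borel_measurable_wnorm2_mult[OF w] \<open>c * \<kappa> > 0\<close> \<open>0 \<le> C\<close>
      nn_integral_wnorm2_id_minus_scaleR_le[OF pd \<open>\<mu> > 0\<close> \<open>\<mu> * lambda_max R \<le> 1\<close> \<rho> w \<open>0 \<le> C\<close> msd]
    unfolding b_def by (intro prob_ge_le_nn_integral_div) auto
  also have "\<dots> \<le> C * \<rho>\<^sup>2 / \<kappa>min / c"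
    using \<open>c > 0\<close> \<open>0 < \<kappa>min\<close> \<open>\<kappa>min \<le> \<kappa>\<close> \<open>0 \<le> C\<close>
    by (simp add: field_simps divide_left_mono mult_left_mono mult_right_mono)
  finally show ?thesis using prob_le_1 unfolding b_def by simp
qed

theorem theorem1:
  fixes P :: "'s measure"
    and Ru :: "'n::finite \<Rightarrow> complex^'m^'m"
    and c \<delta> r :: "'n \<Rightarrow> real"
    and \<mu> \<eta> \<epsilon> :: real
    and i0 :: nat
    and nbr :: "'n \<Rightarrow> 'n set"
    and w :: "'n \<Rightarrow> nat \<Rightarrow> 's \<Rightarrow> complex^'m"
    and \<theta> :: "'n \<Rightarrow> 'n \<Rightarrow> nat \<Rightarrow> 's \<Rightarrow> real"
  assumes "prob_space P"
    and pd: "\<And>k. pos_def_mat (Ru k)"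
    and c_pos: "\<And>k. c k > 0"
    and delta: "\<And>k. 0 < \<delta> k \<and> \<delta> k < 1"
    and rr: "\<And>k. 0 < r k \<and> r k < 1"
    and mu: "\<mu> > 0" "\<And>k. \<mu> * lambda_max (Ru k) \<le> 1"
    and eps: "0 < \<epsilon>" "\<epsilon> < 1"
    and w_meas: "\<And>k i. w k i \<in> borel_measurable P"
    and th_meas: "\<And>k l i. l \<in> nbr k \<Longrightarrow> \<theta> l k i \<in> borel_measurable P"
    and th_range: "\<And>k l i s. l \<in> nbr k \<Longrightarrow> s \<in> space P \<Longrightarrow> \<epsilon> \<le> \<theta> l k i s \<and> \<theta> l k i s \<le> 1"
    and eta: "\<eta> > 0"
    and msd: "\<And>k i. i \<ge> i0 \<Longrightarrow>
               (\<integral>\<^sup>+ s. ennreal (wnorm2 (Ru k) (w k i s)) \<partial>P) \<le> ennreal (\<eta> * \<mu>)"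
  shows "\<forall>k l i. l \<in> nbr k \<and> i \<ge> i0 + 1 \<longrightarrow>
    (let \<rho>max = Max (range (\<lambda>j. lambda_max (mat 1 - \<mu> *\<^sub>R Ru j)));
         \<chi>min = Min (range (\<lambda>j. chi (\<delta> j) (r j)));
         co = \<eta> * \<mu> * \<rho>max\<^sup>2 / \<chi>min;
         bbar = (\<lambda>s. wnorm2 (Ru k) ((mat 1 - \<mu> *\<^sub>R Ru k) *v w k (i - 1) s));
         A = {s \<in> space P. bbar s * \<theta> l k i s > c k * chi (\<delta> k) (r k)}
     in measure P A \<le> min (co / c k) 1)"
proof (intro allI impI, unfold Let_def)
  fix k l i assume "l \<in> nbr k \<and> i \<ge> i0 + 1"
  then have l: "l \<in> nbr k" and i: "i0 \<le> i - 1" by auto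
  interpret prob_space P by fact
  have "0 < Min (range (\<lambda>j. chi (\<delta> j) (r j)))"
    using chi_pos delta rr by (simp add: Min_gr_iff)
  moreover have "Min (range (\<lambda>j. chi (\<delta> j) (r j))) \<le> chi (\<delta> k) (r k)"
    by (rule Min_le) auto
  moreover have "lambda_max (mat 1 - \<mu> *\<^sub>R Ru k) \<le> Max (range (\<lambda>j. lambda_max (mat 1 - \<mu> *\<^sub>R Ru j)))"
    by (rule Max_ge) auto
  ultimately show "measure P {s \<in> space P. wnorm2 (Ru k) ((mat 1 - \<mu> *\<^sub>R Ru k) *v w k (i - 1) s) * \<theta> l k i s
        > c k * chi (\<delta> k) (r k)}
      \<le> min (\<eta> * \<mu> * (Max (range (\<lambda>j. lambda_max (mat 1 - \<mu> *\<^sub>R Ru j))))\<^sup>2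
        / Min (range (\<lambda>j. chi (\<delta> j) (r j))) / c k) 1"
    using eta mu th_range[OF l] msd[OF i]
    by (intro prob_best_response_action_le pd c_pos w_meas) auto
qed

end
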